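(* In the random-feature Dense Associative Memory procedure described in the context, the subroutine GradComp$(\tau,\mathbf{T},\mathbf{x})$, which on input a seed $\tau$, a distributed memory vector $\mathbf{T}\in\mathbb{R}^Y$ and an input $\mathbf{x}\in\mathbb{R}^D$ returns the approximate energy gradient $\nabla_{\mathbf{x}}\hat E(\mathbf{x})$, takes $O(D(Y+D))$ time and $O(D+Y)$ peak memory.
   Context: Setting: $\mathbf{g}:\mathbb{R}^D\to\mathbb{R}^D$ is a differentiable vector function, $Q$ a differentiable scalar function, and $\boldsymbol{\varphi}:\mathbb{R}^D\to\mathbb{R}^Y$ a random feature map consisting of $Y$ random features $\varphi_\alpha$, each determined by a random projection vector $\boldsymbol{\omega}^\alpha\in\mathbb{R}^D$ and evaluated as a scalar function of $\langle\boldsymbol{\omega}^\alpha,\mathbf{x}\rangle$; the random vectors are generated from a random number generator with fixed seed $\tau$ and regenerated on demand. Given memories $\boldsymbol{\xi}^\mu$, the distributed memory is $\mathbf{T}=\sum_\mu\boldsymbol{\varphi}(\boldsymbol{\xi}^\mu)$ and the approximate energy is $\hat E(\mathbf{x})=-Q(\langle\mathbf{T},\boldsymbol{\varphi}(\mathbf{g}(\mathbf{x}))\rangle)$, with gradient $\nabla_{\mathbf{x}}\hat E = -Q'(\langle\boldsymbol{\varphi}(\mathbf{g}(\mathbf{x})),\mathbf{T}\rangle)\,\big(\frac{d\boldsymbol{\varphi}(\mathbf{z})}{d\mathbf{z}}\big|_{\mathbf{z}=\mathbf{g}(\mathbf{x})}^\top\mathbf{T}\big)\frac{d\mathbf{g}(\mathbf{x})}{d\mathbf{x}}$.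 Subroutine RF$(\tau,\boldsymbol{\xi})$ resets the generator to seed $\tau$ and returns $(\varphi_\alpha(\boldsymbol{\xi}))_{\alpha=1}^Y$. Subroutine GradComp$(\tau,\mathbf{T},\mathbf{x})$: $\mathbf{p}\gets\mathrm{RF}(\tau,\mathbf{g}(\mathbf{x}))$; $\mathbf{z}\gets 0_D$; for $i=1,\dots,D$: compute $\mathbf{u}\gets \partial\boldsymbol{\varphi}(\mathbf{y})/\partial y_i|_{\mathbf{y}=\mathbf{g}(\mathbf{x})}\in\mathbb{R}^Y$ and set $z_i\gets\langle\mathbf{u},\mathbf{T}\rangle$; $\mathbf{z}'\gets 0_D$; for $i=1,\dots,D$: compute $\mathbf{y}\gets\partial\mathbf{g}(\mathbf{x})/\partial x_i\in\mathbb{R}^D$ and set $z'_i\gets\langle\mathbf{y},\mathbf{z}\rangle$; compute $q\gets -Q'(\langle\mathbf{T},\mathbf{p}\rangle)$; return $q\,\mathbf{z}'$. Complexity counts arithmetic operations and stored real numbers, with sampling a scalar random number, evaluating scalar elementary functions, and evaluating an entry of $\mathbf{g}$ or of its Jacobian at unit cost. *)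

theory Defs
  imports Complex_Main "HOL-Library.Monad_Syntax"
begin

text \<open>Machine state: number of unit-cost operations performed so far (arithmetic
operations, scalar random samples, evaluations of scalar elementary functions,
evaluations of an entry of g or of its Jacobian), number of real numbers currently
stored, and the peak number of stored real numbers.\<close>

record cstate =
  ops :: nat
  live :: nat
  peak :: nat

type_synonym 'a cm = "cstate \<Rightarrow> 'a \<times> cstate"

definition ret :: "'a \<Rightarrow> 'a cm" where
  "ret x = (\<lambda>s. (x, s))"

definition cbind :: "'a cm \<Rightarrow> ('a \<Rightarrow> 'b cm) \<Rightarrow> 'b cm" where
  "cbind m f = (\<lambda>s. case m s of (a, s') \<Rightarrow> f a s')"

adhoc_overloading Monad_Syntax.bind \<rightleftharpoons> cbind

definition tick :: "nat \<Rightarrow> unit cm" where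
  "tick n = (\<lambda>s. ((), s\<lparr>ops := ops s + n\<rparr>))"

definition alloc :: "nat \<Rightarrow> unit cm" where
  "alloc n = (\<lambda>s. ((), s\<lparr>live := live s + n, peak := max (peak s) (live s + n)\<rparr>))"

definition free :: "nat \<Rightarrow> unit cm" where
  "free n = (\<lambda>s. ((), s\<lparr>live := live s - n\<rparr>))"

primrec loop :: "nat \<Rightarrow> (nat \<Rightarrow> 'a \<Rightarrow> 'a cm) \<Rightarrow> 'a \<Rightarrow> 'a cm" where
  "loop 0 f a = ret a"
| "loop (Suc n) f a = cbind (loop n f a) (f n)"

text \<open>Inner product of two stored vectors of length n: n multiplications and
(at most) n additions.\<close>
definition dot :: "nat \<Rightarrow> (nat \<Rightarrow> real) \<Rightarrow> (nat \<Rightarrow> real) \<Rightarrow> real cm" where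
  "dot n a b = do { tick (2 * n); ret (\<Sum>j<n. a j * b j) }"

text \<open>Vectors in R^D / R^Y are functions nat => real, read at indices < D / < Y.
  gfun x j     : j-th entry of g(x)                      (unit cost)
  jac x j i    : d g_j / d x_i at x                       (unit cost)
  sfun a t     : scalar function of feature a, phi_a(y) = sfun a <omega^a, y>   (unit cost)
  sder a t     : its derivative                           (unit cost)
  Qder t       : Q'(t)                                    (unit cost)
  rng tau a j  : j-th coordinate of omega^a generated from seed tau (unit cost per sample)\<close>

record orc =
  gfun :: "(nat \<Rightarrow> real) \<Rightarrow> nat \<Rightarrow> real"
  jac  :: "(nat \<Rightarrow> real) \<Rightarrow> nat \<Rightarrow> nat \<Rightarrow> real"
  sfun :: "nat \<Rightarrow> real \<Rightarrow> real"
  sder :: "nat \<Rightarrow> real \<Rightarrow> real"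
  Qder :: "real \<Rightarrow> real"
  rng  :: "nat \<Rightarrow> nat \<Rightarrow> nat \<Rightarrow> real"

text \<open>RF(tau, xi): reset generator to seed tau, regenerate each omega^a (D stored
samples), compute the projection h_a = <omega^a, xi> and p_a = phi_a(xi).
Returns p together with the projections h (kept for the derivative evaluations).\<close>
definition RF :: "orc \<Rightarrow> nat \<Rightarrow> nat \<Rightarrow> nat \<Rightarrow> (nat \<Rightarrow> real)
    \<Rightarrow> ((nat \<Rightarrow> real) \<times> (nat \<Rightarrow> real)) cm" where
  "RF orac D Y \<tau> \<xi> = do {
     alloc (2 * Y); tick (2 * Y);
     loop Y (\<lambda>\<alpha> (p, h). do {
         alloc D; tick D;
         w \<leftarrow> loop D (\<lambda>j w. do { tick 1; ret (w(j := rng orac \<tau> \<alpha> j)) }) (\<lambda>_. 0);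
         hv \<leftarrow> dot D w \<xi>;
         tick 1;
         free D;
         ret (p(\<alpha> := sfun orac \<alpha> hv), h(\<alpha> := hv)) })
       (\<lambda>_. 0, \<lambda>_. 0) }"

definition GradComp :: "orc \<Rightarrow> nat \<Rightarrow> nat \<Rightarrow> nat \<Rightarrow> (nat \<Rightarrow> real) \<Rightarrow> (nat \<Rightarrow> real)
    \<Rightarrow> (nat \<Rightarrow> real) cm" where
  "GradComp orac D Y \<tau> T x = do {
     alloc D; tick D;
     gx \<leftarrow> loop D (\<lambda>j v. do { tick 1; ret (v(j := gfun orac x j)) }) (\<lambda>_. 0);
     ph \<leftarrow> RF orac D Y \<tau> gx;
     let p = fst ph; let h = snd ph;
     alloc D; tick D;
     z \<leftarrow> loop D (\<lambda>i z. do {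
           alloc Y; tick Y;
           u \<leftarrow> loop Y (\<lambda>\<alpha> u. do {
                  tick 3;
                  ret (u(\<alpha> := sder orac \<alpha> (h \<alpha>) * rng orac \<tau> \<alpha> i)) }) (\<lambda>_. 0);
           zi \<leftarrow> dot Y u T;
           free Y;
           ret (z(i := zi)) }) (\<lambda>_. 0);
     alloc D; tick D;
     z' \<leftarrow> loop D (\<lambda>i z'. do {
           alloc D; tick D;
           y \<leftarrow> loop D (\<lambda>j y. do { tick 1; ret (y(j := jac orac x j i)) }) (\<lambda>_. 0);
           zi \<leftarrow> dot D y z;
           free D;
           ret (z'(i := zi)) }) (\<lambda>_. 0);
     tp \<leftarrow> dot Y T p;
     tick 2;
     let q = - Qder orac tp;
     alloc D; tick D;
     ret (\<lambda>i. q * z' i) }"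

text \<open>Initial state: the inputs T (Y reals) and x (D reals) are stored.\<close>
definition init_state :: "nat \<Rightarrow> nat \<Rightarrow> cstate" where
  "init_state D Y = \<lparr>ops = 0, live = D + Y, peak = D + Y\<rparr>"

end

theory Submission
  imports Defs
begin

text \<open>Each round of a loop in GradComp performs the same number of operations, needs the same
amount of scratch storage (released at the end of the round), and computes a result that does
not depend on the machine state. Such a loop of n rounds costs n times one round, and its
storage peak is that of a single round. Evaluating GradComp symbolically in this way gives the
returned vector exactly, together with about 4 D^2 + 10 D Y operations (D rounds of O(Y) work
for z, D rounds of O(D) work for z') and a storage peak of at most 5 (D + Y) reals.\<close>

lemma ret_apply [simp]: "ret x s = (x, s)"
  by (simp add: ret_def)

lemma cbind_apply [simp]: "cbind m f s = (case m s of (a, s') \<Rightarrow> f a s')"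
  by (simp add: cbind_def)

lemma tick_apply [simp]: "tick n s = ((), s\<lparr>ops := ops s + n\<rparr>)"
  by (simp add: tick_def)

lemma alloc_apply [simp]:
  "alloc n s = ((), s\<lparr>live := live s + n, peak := max (peak s) (live s + n)\<rparr>)"
  by (simp add: alloc_def)

lemma free_apply [simp]: "free n s = ((), s\<lparr>live := live s - n\<rparr>)"
  by (simp add: free_def)

lemma dot_apply [simp]: "dot n a b s = ((\<Sum>j<n. a j * b j), s\<lparr>ops := ops s + 2 * n\<rparr>)"
  by (simp add: dot_def)

lemma loop_tick_fill [simp]:
  "loop n (\<lambda>j v. do { tick c; ret (v(j := F j)) }) v s
     = ((\<lambda>j. if j < n then F j else v j), s\<lparr>ops := ops s + n * c\<rparr>)"
  by (induction n arbitrary: s) auto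

definition charge :: "nat \<Rightarrow> nat \<Rightarrow> cstate \<Rightarrow> cstate" where
  "charge c k s = s\<lparr>ops := ops s + c, peak := max (peak s) (live s + k)\<rparr>"

lemma charge_charge [simp]: "charge c k (charge c' k s) = charge (c + c') k s"
  by (simp add: charge_def)

lemma loop_charge:
  assumes cost: "\<And>i a s. snd (f i a s) = charge c k s"
    and result: "\<And>i a s s'. fst (f i a s) = fst (f i a s')"
    and "0 < n"
  shows "loop n f a s = (fold (\<lambda>i a. fst (f i a s)) [0..<n] a, charge (n * c) k s)"
  using \<open>0 < n\<close>
proof (induction n rule: nat_induct_non_zero)
  case 1
  then show ?case
    using cost by (simp add: prod_eq_iff)
next
  case (Suc n)
  let ?v = "fold (\<lambda>i a. fst (f i a s)) [0..<n] a"
  have "loop (Suc n) f a s = f n ?v (charge (n * c) k s)"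
    using Suc by simp
  also have "\<dots> = (fst (f n ?v s), charge (Suc n * c) k s)"
    using cost result by (simp add: prod_eq_iff add.commute)
  finally show ?case
    by simp
qed

lemma fold_fun_upd [simp]:
  "fold (\<lambda>i v. v(i := F i)) [0..<n] v = (\<lambda>i. if i < n then F i else v i)"
  by (induction n) auto

lemma fold_fun_upd_pair [simp]:
  "fold (\<lambda>i a. ((fst a)(i := F i), (snd a)(i := G i))) [0..<n] (v, w)
    = ((\<lambda>i. if i < n then F i else v i), (\<lambda>i. if i < n then G i else w i))"
  by (induction n) auto

lemma RF_apply:
  assumes "0 < Y"
  shows "RF orac D Y \<tau> \<xi> s =
    ((\<lambda>\<alpha>. if \<alpha> < Y then sfun orac \<alpha> (\<Sum>j<D. rng orac \<tau> \<alpha> j * \<xi> j) else 0,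
      \<lambda>\<alpha>. if \<alpha> < Y then \<Sum>j<D. rng orac \<tau> \<alpha> j * \<xi> j else 0),
     s\<lparr>ops := ops s + Y * (4 * D + 3), live := live s + 2 * Y,
       peak := max (peak s) (live s + 2 * Y + D)\<rparr>)"
  unfolding RF_def using assms
  by (simp add: split_beta loop_charge[where c = "4 * D + 1" and k = D]
      charge_def max.assoc distrib_left)

lemma GradComp_apply:
  assumes "0 < D" and "0 < Y"
  shows "GradComp orac D Y \<tau> T x s =
    ((\<lambda>i. - Qder orac (\<Sum>\<alpha><Y. T \<alpha> * sfun orac \<alpha> (\<Sum>k<D. rng orac \<tau> \<alpha> k * gfun orac x k))
        * (if i < D
           then \<Sum>j<D. jac orac x j i *
                  (\<Sum>\<alpha><Y. sder orac \<alpha> (\<Sum>k<D. rng orac \<tau> \<alpha> k * gfun orac x k)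
                           * rng orac \<tau> \<alpha> j * T \<alpha>)
           else 0)),
     s\<lparr>ops := ops s + (4 * D * D + 10 * D * Y + 5 * D + 5 * Y + 2),
       live := live s + 4 * D + 2 * Y,
       peak := max (peak s) (live s + max (2 * D + 3 * Y) (4 * D + 2 * Y))\<rparr>)"
  unfolding GradComp_def using assms
  by (simp add: RF_apply loop_charge[where c = "6 * Y" and k = Y]
      loop_charge[where c = "4 * D" and k = D] charge_def max.assoc distrib_left Let_def
      cong: if_cong)

lemma GradComp_ops_bound:
  fixes D Y :: nat
  assumes "1 \<le> D" and "1 \<le> Y"
  shows "4 * D * D + 10 * D * Y + 5 * D + 5 * Y + 2 \<le> 20 * (D * (Y + D))"
proof -
  have "D \<le> D * D" and "Y \<le> D * Y" and "1 \<le> D * Y"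
    using assms by (simp_all add: mult_le_mono)
  moreover have "20 * (D * (Y + D)) = 20 * (D * Y) + 20 * (D * D)"
    by (simp add: algebra_simps)
  ultimately show ?thesis
    by linarith
qed

theorem proposition4:
  "\<exists>C::nat. \<forall>(orac::orc) (D::nat) (Y::nat) (\<tau>::nat) (T::nat \<Rightarrow> real) (x::nat \<Rightarrow> real).
     1 \<le> D \<longrightarrow> 1 \<le> Y \<longrightarrow>
     (let (r, s) = GradComp orac D Y \<tau> T x (init_state D Y) in
        (\<forall>i<D. r i =
            - Qder orac (\<Sum>\<alpha><Y. T \<alpha> * sfun orac \<alpha> (\<Sum>k<D. rng orac \<tau> \<alpha> k * gfun orac x k))
            * (\<Sum>j<D. jac orac x j i *
                 (\<Sum>\<alpha><Y. sder orac \<alpha> (\<Sum>k<D. rng orac \<tau> \<alpha> k * gfun orac x k)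
                          * rng orac \<tau> \<alpha> j * T \<alpha>)))
        \<and> ops s \<le> C * (D * (Y + D))
        \<and> peak s \<le> C * (D + Y))"
proof (intro exI[of _ 20] allI impI, goal_cases)
  case (1 orac D Y \<tau> T x)
  then show ?case
    using GradComp_ops_bound by (simp add: GradComp_apply init_state_def)
qed

end
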